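(* Let $B(y)=|h(y)-(1-V)|$ be randomized response with $h:\mathbb Y\to\{0,1\}$, $V\sim\mathrm{Bern}(\theta)$, $\theta\in[0,1]$, and let $S$ be subsampling without replacement with batch size $q$. Then for all $\alpha>1$ and all datasets $x\simeq_\Delta x'$ of size $N$, $$\Lambda_\alpha(m_x\|m_{x'})\le\max_{\tau\in\{\theta,1-\theta\}}\Lambda_\alpha\big((1-w)\mathrm{Bern}(\cdot\mid\theta)+w\,\mathrm{Bern}(\cdot\mid\tau)\ \big\|\ (1-w)\mathrm{Bern}(\cdot\mid\theta)+w\,\mathrm{Bern}(\cdot\mid1-\tau)\big),$$ with $w=q/N$.
   Context: Datasets are finite sets with more than $q$ elements; batches are subsets of size $q$; subsampling without replacement: $s_x(y)=\binom{|x|}{q}^{-1}$ for $y\subseteq x$, $|y|=q$. $b_y$ is the pmf of $B(y)$ on $\{0,1\}$ and $m_x=\sum_y b_y s_x(y)$. $\mathrm{Bern}(\cdot\mid p)$ is the pmf on $\{0,1\}$ with mass $p$ at $1$. $x\simeq_\Delta x'$ iff $x'=(x\setminus\{a\})\cup\{a'\}$ with $a\in x$, $a'\notin x$. $\Lambda_\alpha(p\|q)=\sum_{z\in\{0,1\}}p(z)^\alpha q(z)^{1-\alpha}$. *)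

theory Defs
  imports "HOL-Analysis.Analysis"
begin

text \<open>Outputs live in {0,1}, represented as integers; a pmf on {0,1} is a function int => real.\<close>

definition Bern :: "real \<Rightarrow> int \<Rightarrow> real" where
  "Bern p z = (if z = 1 then p else if z = 0 then 1 - p else 0)"

definition batches :: "nat \<Rightarrow> 'a set \<Rightarrow> 'a set set" where
  "batches q x = {y. y \<subseteq> x \<and> card y = q}"

definition subsample :: "nat \<Rightarrow> 'a set \<Rightarrow> 'a set \<Rightarrow> real" where
  "subsample q x y = (if y \<in> batches q x then 1 / real (card x choose q) else 0)"

definition rr_pmf :: "real \<Rightarrow> ('a set \<Rightarrow> int) \<Rightarrow> 'a set \<Rightarrow> int \<Rightarrow> real" where
  "rr_pmf \<theta> h y z =
     \<theta> * (if \<bar>h y - (1 - 1)\<bar> = z then 1 else 0)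
   + (1 - \<theta>) * (if \<bar>h y - (1 - 0)\<bar> = z then 1 else 0)"

definition mix_pmf :: "nat \<Rightarrow> real \<Rightarrow> ('a set \<Rightarrow> int) \<Rightarrow> 'a set \<Rightarrow> int \<Rightarrow> real" where
  "mix_pmf q \<theta> h x z = (\<Sum>y\<in>batches q x. rr_pmf \<theta> h y z * subsample q x y)"

definition renyi_term :: "real \<Rightarrow> real \<Rightarrow> real \<Rightarrow> ereal" where
  "renyi_term \<alpha> p r = (if p = 0 then 0 else if r = 0 then \<infinity>
                          else ereal (p powr \<alpha> * r powr (1 - \<alpha>)))"

definition Lambda :: "real \<Rightarrow> (int \<Rightarrow> real) \<Rightarrow> (int \<Rightarrow> real) \<Rightarrow> ereal" where
  "Lambda \<alpha> P Q = (\<Sum>z\<in>{0::int, 1}. renyi_term \<alpha> (P z) (Q z))"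

definition subst_rel :: "'a set \<Rightarrow> 'a set \<Rightarrow> bool" where
  "subst_rel x x' = (\<exists>a a'. a \<in> x \<and> a' \<notin> x \<and> x' = (x - {a}) \<union> {a'})"

end

theory Submission
  imports Defs
begin

text \<open>Writing \<rho>(t) = (1 - t) \<theta> + t (1 - \<theta>) for the probability that randomized response outputs 1
  when h(y) = 0 with probability t, both m_x and m_{x'} are Bernoulli distributions with parameters
  \<rho>((1 - w) A + w b) and \<rho>((1 - w) A + w b'): A is the fraction of batches with h = 0 among those
  avoiding the substituted element (the same for x and x'), b and b' the fractions among those
  containing it, and these make up the share w = q/N of all batches. The function
  (p, r) \<mapsto> \<Lambda>_\<alpha>(Bern p \<parallel> Bern r) is a sum of two perspectives of p^\<alpha>, hence jointly convex,
  so over (A, b, b') \<in> [0,1]^3 it is maximal at a vertex. Vertices with b = b' give 1, the others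
  exactly the two values on the right-hand side. For \<theta> \<in> {0, 1} the bound is infinite unless q = 0,
  in which case both sides equal 1.\<close>

definition bern_lambda :: "real \<Rightarrow> real \<Rightarrow> real \<Rightarrow> real" where
  "bern_lambda \<alpha> p r = p powr \<alpha> * r powr (1 - \<alpha>) + (1 - p) powr \<alpha> * (1 - r) powr (1 - \<alpha>)"

lemma powr_perspective_eq:
  "(r::real) > 0 \<Longrightarrow> p \<ge> 0 \<Longrightarrow> p powr \<alpha> * r powr (1 - \<alpha>) = r * (p / r) powr \<alpha>"
  by (simp add: powr_divide powr_diff)

lemma powr_perspective_convex:
  fixes \<alpha> t p0 p1 r0 r1 :: real
  assumes "\<alpha> \<ge> 1" "p0 > 0" "p1 > 0" "r0 > 0" "r1 > 0" "0 \<le> t" "t \<le> 1"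
  shows "((1 - t) * p0 + t * p1) powr \<alpha> * ((1 - t) * r0 + t * r1) powr (1 - \<alpha>)
    \<le> (1 - t) * (p0 powr \<alpha> * r0 powr (1 - \<alpha>)) + t * (p1 powr \<alpha> * r1 powr (1 - \<alpha>))"
proof -
  define p where "p = (1 - t) * p0 + t * p1"
  define r where "r = (1 - t) * r0 + t * r1"
  have p_nonneg: "p \<ge> 0" and r_pos: "r > 0"
    unfolding p_def r_def using assms by (smt (verit) mult_nonneg_nonneg mult_pos_pos)+
  define \<mu> where "\<mu> = t * r1 / r"
  have \<mu>: "0 \<le> \<mu>" "\<mu> \<le> 1" "1 - \<mu> = (1 - t) * r0 / r"
    and weights: "r * (1 - \<mu>) = (1 - t) * r0" "r * \<mu> = t * r1"
    using r_pos assms by (auto simp: \<mu>_def r_def field_simps)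
  have "p / r = ((1 - t) * r0 / r) * (p0 / r0) + (t * r1 / r) * (p1 / r1)"
    using r_pos assms by (simp add: p_def add_divide_distrib)
  then have ratio: "p / r = (1 - \<mu>) * (p0 / r0) + \<mu> * (p1 / r1)"
    unfolding \<mu>(3) unfolding \<mu>_def .
  have "p powr \<alpha> * r powr (1 - \<alpha>) = r * (p / r) powr \<alpha>"
    using r_pos p_nonneg by (rule powr_perspective_eq)
  also have "\<dots> \<le> r * ((1 - \<mu>) * (p0 / r0) powr \<alpha> + \<mu> * (p1 / r1) powr \<alpha>)"
    using convex_onD[OF powr_convex[OF assms(1)], of \<mu> "p0 / r0" "p1 / r1"] \<mu> r_pos assms
    unfolding ratio by (intro mult_left_mono) auto
  also have "\<dots> = (1 - t) * (r0 * (p0 / r0) powr \<alpha>) + t * (r1 * (p1 / r1) powr \<alpha>)"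
    by (simp add: weights distrib_left mult.assoc[symmetric])
  also have "\<dots> = (1 - t) * (p0 powr \<alpha> * r0 powr (1 - \<alpha>)) + t * (p1 powr \<alpha> * r1 powr (1 - \<alpha>))"
    using assms by (simp add: powr_perspective_eq)
  finally show ?thesis unfolding p_def r_def .
qed

lemma bern_lambda_convex:
  assumes "\<alpha> \<ge> 1" "0 < p0" "p0 < 1" "0 < p1" "p1 < 1" "0 < r0" "r0 < 1" "0 < r1" "r1 < 1"
    and "0 \<le> t" "t \<le> 1"
  shows "bern_lambda \<alpha> ((1 - t) * p0 + t * p1) ((1 - t) * r0 + t * r1)
    \<le> (1 - t) * bern_lambda \<alpha> p0 r0 + t * bern_lambda \<alpha> p1 r1"
proof -
  have "1 - ((1 - t) * u0 + t * u1) = (1 - t) * (1 - u0) + t * (1 - u1)" for u0 u1 :: real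
    by (simp add: algebra_simps)
  then show ?thesis
    using powr_perspective_convex[of \<alpha> p0 p1 r0 r1 t]
      powr_perspective_convex[of \<alpha> "1 - p0" "1 - p1" "1 - r0" "1 - r1" t] assms
    by (simp add: bern_lambda_def algebra_simps)
qed

lemma bern_lambda_diag: "0 < p \<Longrightarrow> p < 1 \<Longrightarrow> bern_lambda \<alpha> p p = 1"
  by (simp add: bern_lambda_def powr_add[symmetric])

lemma bern_lambda_swap: "bern_lambda \<alpha> (1 - p) (1 - r) = bern_lambda \<alpha> p r"
  by (simp add: bern_lambda_def)

lemma bern_lambda_ge_one:
  assumes "\<alpha> \<ge> 1" "0 < p" "p < 1" "0 < r" "r < 1"
  shows "bern_lambda \<alpha> p r \<ge> 1"
proof -
  have "1 = (r * (p / r) + (1 - r) * ((1 - p) / (1 - r))) powr \<alpha>"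
    using assms by simp
  also have "\<dots> \<le> r * (p / r) powr \<alpha> + (1 - r) * ((1 - p) / (1 - r)) powr \<alpha>"
    using convex_onD[OF powr_convex[OF assms(1)], of "1 - r" "p / r" "(1 - p) / (1 - r)"] assms
    by simp
  also have "\<dots> = bern_lambda \<alpha> p r"
    using assms by (simp add: bern_lambda_def powr_perspective_eq)
  finally show ?thesis .
qed

definition rr_one_prob :: "real \<Rightarrow> real \<Rightarrow> real" where
  "rr_one_prob \<theta> t = (1 - t) * \<theta> + t * (1 - \<theta>)"

lemma rr_one_prob_bounds:
  assumes "0 < \<theta>" "\<theta> < 1" "0 \<le> t" "t \<le> 1"
  shows "0 < rr_one_prob \<theta> t" "rr_one_prob \<theta> t < 1"
  unfolding rr_one_prob_def using assms
  by (smt (verit) mult_nonneg_nonneg mult_pos_pos) (intro convex_bound_lt; use assms in auto)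

lemma convex_comb_unit_interval:
  fixes w a b :: real
  assumes "0 \<le> w" "w \<le> 1" "0 \<le> a" "a \<le> 1" "0 \<le> b" "b \<le> 1"
  shows "0 \<le> (1 - w) * a + w * b" "(1 - w) * a + w * b \<le> 1"
  using assms by (auto intro: convex_bound_le)

lemma bern_lambda_rr_segment_le_max:
  assumes "\<alpha> \<ge> 1" "0 < \<theta>" "\<theta> < 1" "0 \<le> t" "t \<le> 1"
    and "u0 \<in> {0..1}" "u1 \<in> {0..1}" "v0 \<in> {0..1}" "v1 \<in> {0..1}"
  shows "bern_lambda \<alpha> (rr_one_prob \<theta> ((1 - t) * u0 + t * u1))
                      (rr_one_prob \<theta> ((1 - t) * v0 + t * v1))
    \<le> max (bern_lambda \<alpha> (rr_one_prob \<theta> u0) (rr_one_prob \<theta> v0))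
          (bern_lambda \<alpha> (rr_one_prob \<theta> u1) (rr_one_prob \<theta> v1))"
proof -
  have rr_affine: "rr_one_prob \<theta> ((1 - t) * u + t * v)
      = (1 - t) * rr_one_prob \<theta> u + t * rr_one_prob \<theta> v" for u v
    by (simp add: rr_one_prob_def algebra_simps)
  have "bern_lambda \<alpha> (rr_one_prob \<theta> ((1 - t) * u0 + t * u1))
                      (rr_one_prob \<theta> ((1 - t) * v0 + t * v1))
      \<le> (1 - t) * bern_lambda \<alpha> (rr_one_prob \<theta> u0) (rr_one_prob \<theta> v0)
        + t * bern_lambda \<alpha> (rr_one_prob \<theta> u1) (rr_one_prob \<theta> v1)"
    unfolding rr_affine using assms rr_one_prob_bounds by (intro bern_lambda_convex) auto
  also have "\<dots> \<le> max (bern_lambda \<alpha> (rr_one_prob \<theta> u0) (rr_one_prob \<theta> v0))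
                     (bern_lambda \<alpha> (rr_one_prob \<theta> u1) (rr_one_prob \<theta> v1))"
    using assms by (intro convex_bound_le) auto
  finally show ?thesis .
qed

lemma bern_lambda_rr_cube_le:
  fixes \<alpha> \<theta> w a b c :: real
  assumes \<alpha>: "\<alpha> \<ge> 1" and \<theta>: "0 < \<theta>" "\<theta> < 1" and w: "0 \<le> w" "w \<le> 1"
    and abc: "a \<in> {0..1}" "b \<in> {0..1}" "c \<in> {0..1}"
  defines "G \<equiv> \<lambda>a b c. bern_lambda \<alpha> (rr_one_prob \<theta> ((1 - w) * a + w * b))
                                        (rr_one_prob \<theta> ((1 - w) * a + w * c))"
    and "s \<equiv> rr_one_prob \<theta> w"
  shows "G a b c \<le> max (bern_lambda \<alpha> \<theta> s) (bern_lambda \<alpha> s \<theta>)"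
proof -
  let ?M = "max (bern_lambda \<alpha> \<theta> s) (bern_lambda \<alpha> s \<theta>)"
  have s: "0 < s" "s < 1" using rr_one_prob_bounds[OF \<theta> w] by (simp_all add: s_def)
  have in_unit: "(1 - w) * a + w * b \<in> {0..1}" if "a \<in> {0..1}" "b \<in> {0..1}" for a b
    using convex_comb_unit_interval[OF w] that by auto
  have corners: "rr_one_prob \<theta> 0 = \<theta>" "rr_one_prob \<theta> 1 = 1 - \<theta>" "rr_one_prob \<theta> w = s"
    "rr_one_prob \<theta> (1 - w) = 1 - s"
    by (simp_all add: s_def rr_one_prob_def algebra_simps)
  have diag: "G a b b = 1" if "a \<in> {0..1}" "b \<in> {0..1}" for a b
    using in_unit[OF that] rr_one_prob_bounds[OF \<theta>] by (simp add: G_def bern_lambda_diag)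
  have vertex: "G a b c \<le> ?M" if bits: "a \<in> {0, 1}" "b \<in> {0, 1}" "c \<in> {0, 1}" for a b c
  proof (cases "b = c")
    case True
    then have "G a b c = 1" using that diag[of a b] by auto
    then show ?thesis using bern_lambda_ge_one[OF \<alpha> \<theta> s] by simp
  next
    case False
    then consider "a = 0" "b = 0" "c = 1" | "a = 0" "b = 1" "c = 0"
      | "a = 1" "b = 0" "c = 1" | "a = 1" "b = 1" "c = 0"
      using bits by auto
    then show ?thesis
      by cases (simp_all add: G_def corners bern_lambda_swap)
  qed
  have edge: "G a b c \<le> ?M" if "a \<in> {0, 1}" "b \<in> {0, 1}" "c \<in> {0..1}" for a b c
  proof -
    have "G a b c = bern_lambda \<alpha>
        (rr_one_prob \<theta> ((1 - c) * ((1 - w) * a + w * b) + c * ((1 - w) * a + w * b)))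
        (rr_one_prob \<theta> ((1 - c) * ((1 - w) * a + w * 0) + c * ((1 - w) * a + w * 1)))"
      by (simp add: G_def algebra_simps)
    also have "\<dots> \<le> max (G a b 0) (G a b 1)"
      unfolding G_def
      by (rule bern_lambda_rr_segment_le_max[OF \<alpha> \<theta>]; (rule in_unit)?; use that in auto)
    also have "\<dots> \<le> ?M" using vertex that by auto
    finally show ?thesis .
  qed
  have face: "G a b c \<le> ?M" if "a \<in> {0, 1}" "b \<in> {0..1}" "c \<in> {0..1}" for a b c
  proof -
    have "G a b c = bern_lambda \<alpha>
        (rr_one_prob \<theta> ((1 - b) * ((1 - w) * a + w * 0) + b * ((1 - w) * a + w * 1)))
        (rr_one_prob \<theta> ((1 - b) * ((1 - w) * a + w * c) + b * ((1 - w) * a + w * c)))"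
      by (simp add: G_def algebra_simps)
    also have "\<dots> \<le> max (G a 0 c) (G a 1 c)"
      unfolding G_def
      by (rule bern_lambda_rr_segment_le_max[OF \<alpha> \<theta>]; (rule in_unit)?; use that in auto)
    also have "\<dots> \<le> ?M" using edge that by auto
    finally show ?thesis .
  qed
  have "G a b c = bern_lambda \<alpha>
      (rr_one_prob \<theta> ((1 - a) * ((1 - w) * 0 + w * b) + a * ((1 - w) * 1 + w * b)))
      (rr_one_prob \<theta> ((1 - a) * ((1 - w) * 0 + w * c) + a * ((1 - w) * 1 + w * c)))"
    by (simp add: G_def algebra_simps)
  also have "\<dots> \<le> max (G 0 b c) (G 1 b c)"
    unfolding G_def
    by (rule bern_lambda_rr_segment_le_max[OF \<alpha> \<theta>]; (rule in_unit)?; use abc in auto)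
  also have "\<dots> \<le> ?M" using face abc by auto
  finally show ?thesis .
qed

lemma Bern_convex_comb: "(\<lambda>z. (1 - w) * Bern p z + w * Bern r z) = Bern ((1 - w) * p + w * r)"
  by (simp add: Bern_def fun_eq_iff algebra_simps)

lemma Lambda_Bern:
  assumes "0 < p" "p < 1" "0 < r" "r < 1"
  shows "Lambda \<alpha> (Bern p) (Bern r) = ereal (bern_lambda \<alpha> p r)"
  using assms by (simp add: Lambda_def renyi_term_def Bern_def bern_lambda_def add.commute)

lemma Lambda_Bern_self:
  assumes "0 \<le> p" "p \<le> 1"
  shows "Lambda \<alpha> (Bern p) (Bern p) = 1"
proof -
  have "renyi_term \<alpha> u u = ereal u" if "u \<ge> 0" for u
    using that by (simp add: renyi_term_def powr_add[symmetric])
  then show ?thesis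
    using assms by (simp add: Lambda_def Bern_def one_ereal_def)
qed

lemma Lambda_eq_infinity:
  assumes "z \<in> {0, 1}" "P z \<noteq> 0" "Q z = 0"
  shows "Lambda \<alpha> P Q = \<infinity>"
  using assms by (auto simp: Lambda_def renyi_term_def)

lemma Lambda_rr_mixture_le:
  fixes \<alpha> \<theta> w A b b' :: real
  assumes \<alpha>: "\<alpha> \<ge> 1" and \<theta>: "0 \<le> \<theta>" "\<theta> \<le> 1" and w: "0 \<le> w" "w \<le> 1"
    and Abb': "A \<in> {0..1}" "b \<in> {0..1}" "b' \<in> {0..1}"
  defines "s \<equiv> rr_one_prob \<theta> w"
  shows "Lambda \<alpha> (Bern (rr_one_prob \<theta> ((1 - w) * A + w * b)))
                  (Bern (rr_one_prob \<theta> ((1 - w) * A + w * b')))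
    \<le> max (Lambda \<alpha> (Bern \<theta>) (Bern s)) (Lambda \<alpha> (Bern s) (Bern \<theta>))"
proof (cases "0 < \<theta> \<and> \<theta> < 1")
  case True
  then have \<theta>': "0 < \<theta>" "\<theta> < 1" by auto
  have "(1 - w) * A + w * c \<in> {0..1}" if "c \<in> {0..1}" for c
    using convex_comb_unit_interval[OF w] Abb'(1) that by auto
  then have "Lambda \<alpha> (Bern (rr_one_prob \<theta> ((1 - w) * A + w * b)))
                        (Bern (rr_one_prob \<theta> ((1 - w) * A + w * b')))
      = ereal (bern_lambda \<alpha> (rr_one_prob \<theta> ((1 - w) * A + w * b))
                              (rr_one_prob \<theta> ((1 - w) * A + w * b')))"
    using Abb' by (intro Lambda_Bern) (auto intro: rr_one_prob_bounds[OF \<theta>'])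
  also have "\<dots> \<le> ereal (max (bern_lambda \<alpha> \<theta> s) (bern_lambda \<alpha> s \<theta>))"
    using bern_lambda_rr_cube_le[OF \<alpha> \<theta>' w Abb'] by (simp add: s_def del: ereal_max)
  also have "\<dots> = max (Lambda \<alpha> (Bern \<theta>) (Bern s)) (Lambda \<alpha> (Bern s) (Bern \<theta>))"
    using rr_one_prob_bounds[OF \<theta>' w] \<theta>' by (simp add: s_def Lambda_Bern)
  finally show ?thesis .
next
  case False
  then have \<theta>_01: "\<theta> = 0 \<or> \<theta> = 1" using \<theta> by auto
  show ?thesis
  proof (cases "w = 0")
    case True
    then have "Lambda \<alpha> (Bern (rr_one_prob \<theta> ((1 - w) * A + w * b)))
                        (Bern (rr_one_prob \<theta> ((1 - w) * A + w * b'))) = 1"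
      using \<theta>_01 Abb' by (auto simp: rr_one_prob_def intro!: Lambda_Bern_self)
    moreover have "Lambda \<alpha> (Bern \<theta>) (Bern s) = 1"
      using True \<theta> by (simp add: s_def rr_one_prob_def Lambda_Bern_self)
    ultimately show ?thesis by simp
  next
    case False
    have "Lambda \<alpha> (Bern s) (Bern \<theta>) = \<infinity>"
      using \<theta>_01
    proof
      assume "\<theta> = 0"
      then show ?thesis using False by (intro Lambda_eq_infinity[of 1]) (simp_all add: s_def rr_one_prob_def Bern_def)
    next
      assume "\<theta> = 1"
      then show ?thesis using False by (intro Lambda_eq_infinity[of 0]) (simp_all add: s_def rr_one_prob_def Bern_def)
    qed
    then show ?thesis by simp
  qed
qed

definition average :: "('b \<Rightarrow> real) \<Rightarrow> 'b set \<Rightarrow> real" where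
  "average f B = sum f B / card B"

lemma card_mult_average: "finite B \<Longrightarrow> card B * average f B = sum f B"
  by (cases "B = {}") (simp_all add: average_def)

lemma average_bounds:
  assumes "\<And>y. y \<in> B \<Longrightarrow> f y \<in> {0..1}"
  shows "average f B \<in> {0..1}"
proof -
  have "0 \<le> sum f B" "sum f B \<le> card B"
    using assms sum_mono[of B f "\<lambda>_. 1"] by (auto intro: sum_nonneg)
  then show ?thesis
    by (cases "card B = 0") (auto simp: average_def divide_le_eq_1)
qed

lemma average_affine:
  "finite B \<Longrightarrow> B \<noteq> {} \<Longrightarrow> average (\<lambda>y. c + d * f y) B = c + d * average f B"
  by (simp add: average_def sum.distrib sum_distrib_left[symmetric] field_simps)

lemma average_Un:
  assumes "finite A" "finite B" "A \<inter> B = {}"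
  shows "average f (A \<union> B)
    = card A / card (A \<union> B) * average f A + card B / card (A \<union> B) * average f B"
  using assms card_mult_average[of A f] card_mult_average[of B f]
  by (simp add: average_def sum.union_disjoint add_divide_distrib)

lemma average_Bern:
  assumes "finite B" "B \<noteq> {}"
  shows "average (\<lambda>y. Bern (p y) z) B = Bern (average p B) z"
  using average_affine[OF assms, of 1 "-1" p] by (simp add: Bern_def average_def)

lemma finite_batches: "finite x \<Longrightarrow> finite (batches q x)"
  unfolding batches_def by (rule finite_subset[of _ "Pow x"]) auto

lemma card_batches: "finite x \<Longrightarrow> card (batches q x) = card x choose q"
  unfolding batches_def by (rule n_subsets)

lemma batches_remove_Un:
  assumes "a \<in> x"
  shows "batches q x = batches q (x - {a}) \<union> {y \<in> batches q x. a \<in> y}"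
    and "batches q (x - {a}) \<inter> {y \<in> batches q x. a \<in> y} = {}"
  using assms by (auto simp: batches_def)

lemma card_batches_containing:
  assumes "finite x" "a \<in> x"
  shows "card x * card {y \<in> batches q x. a \<in> y} = q * (card x choose q)"
proof -
  define n where "n = card (x - {a})"
  have card_x: "card x = Suc n"
    using card_Suc_Diff1[OF assms] by (simp add: n_def)
  have "card (batches q x) = card (batches q (x - {a})) + card {y \<in> batches q x. a \<in> y}"
    using batches_remove_Un[OF assms(2), of q] assms(1)
    by (simp add: finite_batches card_Un_disjoint[symmetric])
  then have "card {y \<in> batches q x. a \<in> y} = (Suc n choose q) - (n choose q)"
    using assms(1) by (simp add: card_batches card_x n_def)
  moreover have "Suc n * ((Suc n choose q) - (n choose q)) = q * (Suc n choose q)"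
  proof (cases q)
    case (Suc k)
    then have "(Suc n choose q) - (n choose q) = n choose k" by simp
    then show ?thesis using times_binomial_minus1_eq[of q "Suc n"] Suc by simp
  qed simp
  ultimately show ?thesis by (simp add: card_x)
qed

lemma average_batches_remove:
  assumes "finite x" "a \<in> x" "q < card x"
  defines "w \<equiv> real q / real (card x)"
  shows "average f (batches q x)
    = (1 - w) * average f (batches q (x - {a})) + w * average f {y \<in> batches q x. a \<in> y}"
proof -
  let ?B0 = "batches q (x - {a})" and ?B1 = "{y \<in> batches q x. a \<in> y}"
  have fin: "finite ?B0" "finite ?B1" using assms(1) by (simp_all add: finite_batches)
  have C_pos: "card (batches q x) > 0" using assms by (simp add: card_batches)
  have "real (card x) * card ?B1 = q * card (batches q x)"
    using card_batches_containing[OF assms(1,2), of q]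
    by (simp add: card_batches[OF assms(1)] flip: of_nat_mult)
  then have w1: "card ?B1 / card (batches q x) = w"
    using C_pos assms(3) by (simp add: w_def field_simps)
  have "card (batches q x) = card ?B0 + card ?B1"
    using batches_remove_Un[OF assms(2), of q] fin by (simp add: card_Un_disjoint[symmetric])
  then have "real (card ?B0) = real (card (batches q x)) - card ?B1" by simp
  then have w0: "card ?B0 / card (batches q x) = 1 - w"
    using C_pos by (simp add: w1[symmetric] diff_divide_distrib)
  have "average f (batches q x) = average f (?B0 \<union> ?B1)"
    using batches_remove_Un(1)[OF assms(2)] by simp
  also have "\<dots> = (1 - w) * average f ?B0 + w * average f ?B1"
    using average_Un[OF fin batches_remove_Un(2)[OF assms(2)], of f] w0 w1
    by (simp only: batches_remove_Un(1)[OF assms(2), symmetric])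
  finally show ?thesis .
qed

lemma rr_pmf_eq_Bern:
  "h y \<in> {0, 1} \<Longrightarrow> rr_pmf \<theta> h y = Bern (rr_one_prob \<theta> (of_bool (h y = 0)))"
  by (auto simp: rr_pmf_def Bern_def rr_one_prob_def fun_eq_iff)

lemma mix_pmf_eq_Bern:
  assumes h01: "\<And>y. h y \<in> {0, 1}" and "finite x" "q \<le> card x"
  shows "mix_pmf q \<theta> h x = Bern (rr_one_prob \<theta> (average (\<lambda>y. of_bool (h y = 0)) (batches q x)))"
proof
  fix z
  have fin: "finite (batches q x)" using assms by (simp add: finite_batches)
  have "card (batches q x) > 0" using assms by (simp add: card_batches)
  then have ne: "batches q x \<noteq> {}" by auto
  have rr_affine: "rr_one_prob \<theta> t = \<theta> + (1 - 2 * \<theta>) * t" for t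
    by (simp add: rr_one_prob_def algebra_simps)
  have "mix_pmf q \<theta> h x z
      = average (\<lambda>y. Bern (rr_one_prob \<theta> (of_bool (h y = 0))) z) (batches q x)"
    using assms by (simp add: mix_pmf_def subsample_def average_def card_batches rr_pmf_eq_Bern
        sum_divide_distrib)
  also have "\<dots> = Bern (average (\<lambda>y. rr_one_prob \<theta> (of_bool (h y = 0))) (batches q x)) z"
    by (rule average_Bern[OF fin ne])
  also have "\<dots> = Bern (rr_one_prob \<theta> (average (\<lambda>y. of_bool (h y = 0)) (batches q x))) z"
    by (simp only: rr_affine average_affine[OF fin ne])
  finally show "mix_pmf q \<theta> h x z = \<dots>" .
qed

theorem mainTheorem13:
  fixes h :: "'a set \<Rightarrow> int" and \<theta> \<alpha> :: real and q N :: nat and x x' :: "'a set"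
  assumes h01: "\<And>y. h y \<in> {0, 1}"
    and \<theta>: "0 \<le> \<theta>" "\<theta> \<le> 1"
    and \<alpha>: "\<alpha> > 1"
    and fin: "finite x" and finx': "finite x'"
    and Nx: "card x = N" and Nq: "N > q"
    and nb: "subst_rel x x'"
  shows "Lambda \<alpha> (mix_pmf q \<theta> h x) (mix_pmf q \<theta> h x') \<le>
    (let w = real q / real N in
     Max ((\<lambda>\<tau>. Lambda \<alpha> (\<lambda>z. (1 - w) * Bern \<theta> z + w * Bern \<tau> z)
                        (\<lambda>z. (1 - w) * Bern \<theta> z + w * Bern (1 - \<tau>) z)) ` {\<theta>, 1 - \<theta>}))"
proof -
  obtain a a' where a: "a \<in> x" "a' \<notin> x" and x': "x' = (x - {a}) \<union> {a'}"
    using nb unfolding subst_rel_def by blast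
  have a': "a' \<in> x'" "x' - {a'} = x - {a}" and Nx': "card x' = N"
    using a fin Nx Nq by (auto simp: x' card_insert_if)
  define w where "w = real q / real N"
  define A where "A = average (\<lambda>y. of_bool (h y = 0)) (batches q (x - {a}))"
  define b where "b = average (\<lambda>y. of_bool (h y = 0)) {y \<in> batches q x. a \<in> y}"
  define b' where "b' = average (\<lambda>y. of_bool (h y = 0)) {y \<in> batches q x'. a' \<in> y}"
  have m: "mix_pmf q \<theta> h x = Bern (rr_one_prob \<theta> ((1 - w) * A + w * b))"
    using mix_pmf_eq_Bern[OF h01 fin] average_batches_remove[OF fin a(1)] Nx Nq
    by (simp add: w_def A_def b_def)
  have m': "mix_pmf q \<theta> h x' = Bern (rr_one_prob \<theta> ((1 - w) * A + w * b'))"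
    using mix_pmf_eq_Bern[OF h01 finx'] average_batches_remove[OF finx' a'(1)] Nx' Nq
    by (simp add: w_def A_def b'_def a'(2))
  have "A \<in> {0..1}" "b \<in> {0..1}" "b' \<in> {0..1}"
    unfolding A_def b_def b'_def by (rule average_bounds, simp)+
  moreover have "0 \<le> w" "w \<le> 1" using Nq by (simp_all add: w_def)
  ultimately have "Lambda \<alpha> (mix_pmf q \<theta> h x) (mix_pmf q \<theta> h x')
      \<le> max (Lambda \<alpha> (Bern \<theta>) (Bern (rr_one_prob \<theta> w)))
            (Lambda \<alpha> (Bern (rr_one_prob \<theta> w)) (Bern \<theta>))"
    unfolding m m' using \<alpha> \<theta> by (intro Lambda_rr_mixture_le) auto
  then show ?thesis
    unfolding Let_def w_def[symmetric] Bern_convex_comb by (simp add: rr_one_prob_def algebra_simps)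
qed

end
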